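(* Let $f(z)=e^z$, let $z_0\in\mathbb{C}$ satisfy $f^n(z_0)\to\infty$, set $z_n=f^n(z_0)$ and $D_n=D_{2\pi}(z_n)$ for $n\geq1$. Then there exist $n_0\in\mathbb{N}$ and holomorphic maps $\phi_n\colon D_n\to\mathbb{C}$, $n\geq n_0$, such that: (a) $\phi_n(z_n)=z_0$; (b) $f^n(\phi_n(z))=z$ for all $z\in D_n$; (c) $\sup_{z\in D_n}|\phi_n'(z)|\to0$ as $n\to\infty$; (d) $\mathrm{diam}(\phi_n(D_n))\to0$ as $n\to\infty$.
   Context: $D_r(w)$ denotes the open Euclidean disc of radius $r$ centred at $w$; $f^n$ is the $n$-th iterate. *)

theory Defs
  imports "HOL-Analysis.Analysis"
begin

end

theory Submission
  imports Defs "HOL-Complex_Analysis.Complex_Analysis"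
begin

(* Let z_n = exp^n(z0) escape to infinity, and fix N with |z_k| >= 4 pi for all k >= N.
   On a disc D_{2 pi}(c) with |c| = |exp w| >= 4 pi the branch L(z) = w + Ln(z / exp w)
   inverts exp, sends c to w, maps the disc into D_{2 pi}(w) and has |L'(z)| = 1/|z| <= 1/2.
   Composing these branches backwards along the orbit gives maps G_m : D_{2 pi}(z_{N+m}) -> C
   inverting exp^m, sending z_{N+m} to z_N and contracting by the factor (1/2)^m.
   Since exp^N has nowhere vanishing derivative it has a local holomorphic inverse H near z_N,
   sending z_N to z0, with bounded derivative.  For n large the image of G_{n-N} lies in the
   domain of H, and phi_n = H o G_{n-N} inverts exp^n with |phi_n'| <= M (1/2)^(n-N); this
   bound yields the statements on derivatives and (via a mean value estimate) on diameters. *)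

lemma has_field_derivative_exp_iterate:
  "(((exp::complex \<Rightarrow> complex) ^^ n) has_field_derivative (\<Prod>k<n. (exp ^^ Suc k) z)) (at z)"
proof (induction n)
  case 0
  then show ?case by simp
next
  case (Suc n)
  have "((exp \<circ> (exp ^^ n)) has_field_derivative exp ((exp ^^ n) z) * (\<Prod>k<n. (exp ^^ Suc k) z)) (at z)"
    using DERIV_chain[OF DERIV_exp Suc.IH] .
  then show ?case by (simp add: o_def mult.commute)
qed

lemma deriv_exp_iterate_nonzero: "deriv ((exp::complex \<Rightarrow> complex) ^^ n) z \<noteq> 0"
  using DERIV_imp_deriv[OF has_field_derivative_exp_iterate] by simp

lemma holomorphic_exp_iterate: "((exp::complex \<Rightarrow> complex) ^^ n) holomorphic_on S"
  unfolding holomorphic_on_def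
  using has_field_derivative_exp_iterate field_differentiable_at_within field_differentiable_def
  by blast

lemma holomorphic_local_inverse_bounded:
  assumes hol: "f holomorphic_on S" and S: "open S" "z0 \<in> S" and dnz: "deriv f z0 \<noteq> 0"
  obtains r H M where "r > 0" "H holomorphic_on ball (f z0) r" "H (f z0) = z0"
    "\<And>w. w \<in> ball (f z0) r \<Longrightarrow> f (H w) = w"
    "\<And>w. w \<in> ball (f z0) r \<Longrightarrow> norm (deriv H w) \<le> M"
proof -
  obtain \<rho> where \<rho>: "\<rho> > 0" "ball z0 \<rho> \<subseteq> S" "open (f ` ball z0 \<rho>)" "inj_on f (ball z0 \<rho>)"
    using has_complex_derivative_locally_invertible[OF hol S(2,1) dnz] by blast
  define V where "V = f ` ball z0 \<rho>"
  have holV: "f holomorphic_on ball z0 \<rho>" using hol \<rho>(2) holomorphic_on_subset by blast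
  obtain g where g: "g holomorphic_on V" "\<And>z. z \<in> ball z0 \<rho> \<Longrightarrow> g (f z) = z"
    using holomorphic_has_inverse[OF holV open_ball \<rho>(4)] unfolding V_def by metis
  obtain r1 where r1: "r1 > 0" "ball (f z0) r1 \<subseteq> V"
    using \<rho> unfolding V_def by (meson centre_in_ball imageI openE)
  define r where "r = r1 / 2"
  have cb: "cball (f z0) r \<subseteq> V" using r1 by (auto simp: r_def)
  have "continuous_on V (deriv g)"
    using g(1) \<rho>(3) unfolding V_def[symmetric]
    by (simp add: holomorphic_deriv holomorphic_on_imp_continuous_on)
  then have "compact (deriv g ` cball (f z0) r)"
    using cb by (meson compact_cball compact_continuous_image continuous_on_subset)
  then obtain M where M: "\<And>w. w \<in> cball (f z0) r \<Longrightarrow> norm (deriv g w) \<le> M"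
    using compact_imp_bounded bounded_iff by (metis imageI)
  show ?thesis
  proof (rule that[of r g M])
    show "r > 0" using r1 by (simp add: r_def)
    show "g holomorphic_on ball (f z0) r"
      using g(1) cb by (meson ball_subset_cball holomorphic_on_subset order_trans)
    show "g (f z0) = z0" using g(2) \<rho>(1) by simp
    show "f (g w) = w" if w: "w \<in> ball (f z0) r" for w
    proof -
      have "w \<in> V" using w cb by (meson ball_subset_cball subsetD)
      then obtain u where "u \<in> ball z0 \<rho>" "w = f u" unfolding V_def by blast
      then show ?thesis by (simp add: g(2))
    qed
    show "norm (deriv g w) \<le> M" if "w \<in> ball (f z0) r" for w
      using M that by auto
  qed
qed

section \<open>Logarithm branches on discs far from the origin\<close>

definition log_branch :: "complex \<Rightarrow> complex \<Rightarrow> complex" where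
  "log_branch w z = w + Ln (z / exp w)"

lemma log_branch_centre [simp]: "log_branch w (exp w) = w"
  by (simp add: log_branch_def)

text \<open>If \<open>|exp w| \<ge> 4\<pi>\<close>, then on the disc \<open>ball (exp w) (2\<pi>)\<close> the quotient \<open>z / exp w\<close> stays in the
  right half plane, so the branch is holomorphic there, inverts \<open>exp\<close>, and has
  derivative \<open>1/z\<close> of modulus at most \<open>1/2\<close>.\<close>
lemma log_branch_props:
  assumes far: "4 * pi \<le> norm (exp w)" and z: "z \<in> ball (exp w) (2 * pi)"
  shows "(log_branch w has_field_derivative 1 / z) (at z)" "norm (1 / z) \<le> 1 / 2"
    "exp (log_branch w z) = z"
proof -
  define c where "c = exp w"
  have cnz: "c \<noteq> 0" by (simp add: c_def)
  have d: "norm (z - c) < 2 * pi" using z by (simp add: c_def dist_norm norm_minus_commute)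
  have zn: "norm z > 2 * pi"
    using norm_triangle_ineq2[of c "c - z"] d far by (simp add: c_def norm_minus_commute)
  then have znz: "z \<noteq> 0" using pi_gt_zero by auto
  have "norm (z / c - 1) = norm (z - c) / norm c"
    using cnz by (metis norm_divide diff_divide_distrib divide_self)
  also have "\<dots> < 1 / 2" using d far pi_gt_zero by (simp add: c_def divide_simps)
  finally have "\<bar>Re (z / c) - 1\<bar> < 1 / 2" using abs_Re_le_cmod[of "z / c - 1"] by simp
  then have "Re (z / c) > 0" by linarith
  then have nn: "z / c \<notin> \<real>\<^sub>\<le>\<^sub>0" by (simp add: complex_nonpos_Reals_iff)
  have "((\<lambda>u. u / c) has_field_derivative 1 / c) (at z)"
    using cnz by (auto intro!: derivative_eq_intros)
  from DERIV_chain2[OF has_field_derivative_Ln[OF nn] this]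
  have "((\<lambda>u. w + Ln (u / c)) has_field_derivative 0 + inverse (z / c) * (1 / c)) (at z)"
    by (intro DERIV_add DERIV_const)
  moreover have "0 + inverse (z / c) * (1 / c) = 1 / z" using cnz znz by (simp add: field_simps)
  ultimately show "(log_branch w has_field_derivative 1 / z) (at z)"
    unfolding log_branch_def[abs_def] c_def by simp
  show "norm (1 / z) \<le> 1 / 2" using zn pi_gt3 by (simp add: norm_divide divide_simps)
  show "exp (log_branch w z) = z"
    using nn cnz znz by (simp add: log_branch_def exp_add c_def)
qed

text \<open>By the derivative bound the branch maps \<open>ball (exp w) (2\<pi>)\<close> into \<open>ball w (2\<pi>)\<close>.\<close>
lemma log_branch_maps_ball:
  assumes far: "4 * pi \<le> norm (exp w)" and z: "z \<in> ball (exp w) (2 * pi)"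
  shows "log_branch w z \<in> ball w (2 * pi)"
proof -
  have "norm (log_branch w z - log_branch w (exp w)) \<le> 1 / 2 * norm (z - exp w)"
    using log_branch_props[OF far] z pi_gt_zero
    by (intro field_differentiable_bound[where S = "ball (exp w) (2 * pi)" and f' = "\<lambda>z. 1 / z"])
      (auto intro: has_field_derivative_at_within)
  moreover have "norm (z - exp w) < 2 * pi" using z by (simp add: dist_norm norm_minus_commute)
  ultimately show ?thesis
    by (simp add: dist_norm norm_minus_commute) (use pi_gt_zero in linarith)
qed

section \<open>Pulling back along an orbit\<close>

primrec pullback :: "complex \<Rightarrow> nat \<Rightarrow> complex \<Rightarrow> complex" where
  "pullback a 0 = (\<lambda>z. z)"
| "pullback a (Suc m) = (\<lambda>z. pullback a m (log_branch ((exp ^^ m) a) z))"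

lemma pullback_centre: "pullback a m ((exp ^^ m) a) = a"
  by (induction m) simp_all

lemma pullback_props:
  assumes far: "\<And>k. 4 * pi \<le> norm ((exp ^^ Suc k) a)"
  shows "\<forall>z \<in> ball ((exp ^^ m) a) (2 * pi).
           (pullback a m has_field_derivative deriv (pullback a m) z) (at z) \<and>
           norm (deriv (pullback a m) z) \<le> (1 / 2) ^ m \<and> (exp ^^ m) (pullback a m z) = z"
proof (induction m)
  case 0
  show ?case by (simp add: deriv_ident DERIV_ident)
next
  case (Suc m)
  show ?case
  proof
    fix z assume z: "z \<in> ball ((exp ^^ Suc m) a) (2 * pi)"
    define w where "w = (exp ^^ m) a"
    have farw: "4 * pi \<le> norm (exp w)" using far[of m] by (simp add: w_def)
    have zw: "z \<in> ball (exp w) (2 * pi)" using z by (simp add: w_def)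
    note L = log_branch_props[OF farw zw]
    have "log_branch w z \<in> ball ((exp ^^ m) a) (2 * pi)"
      using log_branch_maps_ball[OF farw zw] by (simp add: w_def)
    with Suc.IH have IH: "(pullback a m has_field_derivative deriv (pullback a m) (log_branch w z))
        (at (log_branch w z))" "norm (deriv (pullback a m) (log_branch w z)) \<le> (1 / 2) ^ m"
        "(exp ^^ m) (pullback a m (log_branch w z)) = log_branch w z"
      by blast+
    define D where "D = deriv (pullback a m) (log_branch w z) * (1 / z)"
    have chain: "(pullback a (Suc m) has_field_derivative D) (at z)"
      using DERIV_chain2[OF IH(1) L(1)] by (simp add: D_def w_def)
    have "norm D \<le> (1 / 2) ^ m * (1 / 2)"
      unfolding D_def norm_mult using IH(2) L(2) by (intro mult_mono) auto
    moreover have "(exp ^^ Suc m) (pullback a (Suc m) z) = z"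
      using IH(3) L(3) by (simp add: w_def)
    ultimately show "(pullback a (Suc m) has_field_derivative deriv (pullback a (Suc m)) z) (at z) \<and>
        norm (deriv (pullback a (Suc m)) z) \<le> (1 / 2) ^ Suc m \<and>
        (exp ^^ Suc m) (pullback a (Suc m) z) = z"
      using chain DERIV_imp_deriv[OF chain] by simp
  qed
qed

lemma pullback_near_start:
  assumes far: "\<And>k. 4 * pi \<le> norm ((exp ^^ Suc k) a)"
    and z: "z \<in> ball ((exp ^^ m) a) (2 * pi)"
  shows "pullback a m z \<in> ball a (2 * pi * (1 / 2) ^ m)"
proof -
  have "norm (pullback a m z - pullback a m ((exp ^^ m) a)) \<le> (1 / 2) ^ m * norm (z - (exp ^^ m) a)"
    using pullback_props[OF far, of m] z pi_gt_zero
    by (intro field_differentiable_bound[where S = "ball ((exp ^^ m) a) (2 * pi)"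
          and f' = "deriv (pullback a m)"]) (auto intro: has_field_derivative_at_within)
  also have "\<dots> < (1 / 2) ^ m * (2 * pi)"
    using z by (intro mult_strict_left_mono) (auto simp: dist_norm norm_minus_commute)
  finally show ?thesis by (simp add: pullback_centre dist_norm norm_minus_commute mult.commute)
qed

lemma inverse_branch_along_orbit:
  fixes z0 :: complex
  assumes far: "\<And>k. N \<le> k \<Longrightarrow> 4 * pi \<le> norm ((exp ^^ k) z0)"
    and hol: "H holomorphic_on ball ((exp ^^ N) z0) r"
    and inv: "\<And>w. w \<in> ball ((exp ^^ N) z0) r \<Longrightarrow> (exp ^^ N) (H w) = w"
    and bound: "\<And>w. w \<in> ball ((exp ^^ N) z0) r \<Longrightarrow> norm (deriv H w) \<le> M"
    and n: "N \<le> n" "2 * pi * (1 / 2) ^ (n - N) \<le> r"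
  defines "\<phi> \<equiv> \<lambda>u. H (pullback ((exp ^^ N) z0) (n - N) u)"
    and "D \<equiv> ball ((exp ^^ n) z0) (2 * pi)"
  shows "\<phi> holomorphic_on D" "\<phi> ((exp ^^ n) z0) = H ((exp ^^ N) z0)"
    "\<forall>z\<in>D. (exp ^^ n) (\<phi> z) = z" "\<forall>z\<in>D. norm (deriv \<phi> z) \<le> M * (1 / 2) ^ (n - N)"
proof -
  define a where "a = (exp ^^ N) z0"
  define m where "m = n - N"
  have orbit: "(exp ^^ k) a = (exp ^^ (k + N)) z0" for k by (simp add: a_def funpow_add)
  have far': "4 * pi \<le> norm ((exp ^^ Suc k) a)" for k using far[of "Suc k + N"] orbit by simp
  have D: "D = ball ((exp ^^ m) a) (2 * pi)" using n(1) by (simp add: D_def orbit m_def)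
  have \<phi>: "\<phi> = (\<lambda>u. H (pullback a m u))" by (simp add: \<phi>_def a_def m_def)
  have step: "(\<phi> has_field_derivative deriv H (pullback a m z) * deriv (pullback a m) z) (at z)
      \<and> norm (deriv \<phi> z) \<le> M * (1 / 2) ^ m \<and> (exp ^^ n) (\<phi> z) = z" if z: "z \<in> D" for z
  proof -
    have G: "(pullback a m has_field_derivative deriv (pullback a m) z) (at z)"
      "norm (deriv (pullback a m) z) \<le> (1 / 2) ^ m" "(exp ^^ m) (pullback a m z) = z"
      using pullback_props[OF far', of m] z D by auto
    have Gz: "pullback a m z \<in> ball a r"
      using pullback_near_start[OF far', of z m] z D n(2) by (auto simp: m_def a_def)
    have chain: "(\<phi> has_field_derivative deriv H (pullback a m z) * deriv (pullback a m) z) (at z)"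
      unfolding \<phi> using DERIV_chain2[OF holomorphic_derivI[OF hol open_ball] G(1)] Gz a_def by blast
    have "norm (deriv H (pullback a m z) * deriv (pullback a m) z) \<le> M * (1 / 2) ^ m"
      unfolding norm_mult using bound[of "pullback a m z"] Gz G(2) a_def
      by (intro mult_mono) (auto intro: order_trans[OF norm_ge_zero])
    moreover have "(exp ^^ n) (\<phi> z) = (exp ^^ m) ((exp ^^ N) (H (pullback a m z)))"
      using n(1) by (simp add: \<phi> m_def flip: funpow_add[THEN fun_cong, unfolded o_apply])
    ultimately show ?thesis using chain DERIV_imp_deriv[OF chain] inv[of "pullback a m z"] Gz G(3)
      by (simp add: a_def)
  qed
  show "\<phi> holomorphic_on D"
    unfolding holomorphic_on_def using step field_differentiable_at_within field_differentiable_def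
    by blast
  show "\<phi> ((exp ^^ n) z0) = H ((exp ^^ N) z0)"
    using pullback_centre[of a m] orbit[of m] n(1) by (simp add: \<phi> m_def a_def)
  show "\<forall>z\<in>D. (exp ^^ n) (\<phi> z) = z" "\<forall>z\<in>D. norm (deriv \<phi> z) \<le> M * (1 / 2) ^ (n - N)"
    using step by (auto simp: m_def)
qed

lemma diameter_image_ball_le:
  fixes f :: "complex \<Rightarrow> complex"
  assumes hol: "f holomorphic_on ball c R" and R: "0 < R"
    and bound: "\<And>z. z \<in> ball c R \<Longrightarrow> norm (deriv f z) \<le> B"
  shows "bounded (f ` ball c R)" "diameter (f ` ball c R) \<le> 2 * R * B"
proof -
  have B: "0 \<le> B" using bound[of c] R by (meson centre_in_ball norm_ge_zero order_trans)
  have lip: "norm (f z - f w) \<le> 2 * R * B" if z: "z \<in> ball c R" and w: "w \<in> ball c R" for z w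
  proof -
    have "norm (f z - f w) \<le> B * norm (z - w)"
      using z w bound holomorphic_derivI[OF hol open_ball]
      by (intro field_differentiable_bound[where S = "ball c R" and f' = "deriv f"])
        (auto intro: has_field_derivative_at_within)
    also have "\<dots> \<le> B * (2 * R)"
      using z w B dist_triangle_less_add[of z c R w R]
      by (intro mult_left_mono) (auto simp: dist_norm dist_commute norm_minus_commute)
    finally show ?thesis by (simp add: mult_ac)
  qed
  have "f ` ball c R \<subseteq> cball (f c) (2 * R * B)"
    using lip[of c] R by (auto simp: dist_norm)
  then show "bounded (f ` ball c R)" using bounded_cball bounded_subset by blast
  show "diameter (f ` ball c R) \<le> 2 * R * B"
    using lip R B by (intro diameter_le) auto
qed

lemma eventually_geometric_le:
  assumes "0 < \<epsilon>"
  shows "\<forall>\<^sub>F n in sequentially. C * (1 / 2 :: real) ^ (n - N) \<le> \<epsilon>"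
proof -
  have "(\<lambda>n. (1 / 2 :: real) ^ n) \<longlonglongrightarrow> 0" by (rule LIMSEQ_power_zero) simp
  then have "(\<lambda>n. (1 / 2 :: real) ^ (n - N)) \<longlonglongrightarrow> 0"
    using filterlim_compose[OF _ filterlim_minus_const_nat_at_top] by blast
  then have "(\<lambda>n. C * (1 / 2 :: real) ^ (n - N)) \<longlonglongrightarrow> 0"
    using tendsto_mult_right_zero by blast
  from order_tendstoD(2)[OF this assms] show ?thesis by (rule eventually_mono) simp
qed

theorem mainTheorem10:
  fixes z0 :: complex
  assumes esc: "filterlim (\<lambda>n. (exp ^^ n) z0) at_infinity sequentially"
  shows "\<exists>(n0::nat) (\<phi> :: nat \<Rightarrow> complex \<Rightarrow> complex).
    (\<forall>n\<ge>n0. \<phi> n holomorphic_on ball ((exp ^^ n) z0) (2 * pi)) \<and>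
    (\<forall>n\<ge>n0. \<phi> n ((exp ^^ n) z0) = z0) \<and>
    (\<forall>n\<ge>n0. \<forall>z\<in>ball ((exp ^^ n) z0) (2 * pi). (exp ^^ n) (\<phi> n z) = z) \<and>
    (\<forall>\<epsilon>>0. \<forall>\<^sub>F n in sequentially.
        \<forall>z\<in>ball ((exp ^^ n) z0) (2 * pi). norm (deriv (\<phi> n) z) \<le> \<epsilon>) \<and>
    (\<forall>\<epsilon>>0. \<forall>\<^sub>F n in sequentially.
        bounded (\<phi> n ` ball ((exp ^^ n) z0) (2 * pi)) \<and>
        diameter (\<phi> n ` ball ((exp ^^ n) z0) (2 * pi)) \<le> \<epsilon>)"
proof -
  obtain N where far: "\<And>k. N \<le> k \<Longrightarrow> 4 * pi \<le> norm ((exp ^^ k) z0)"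
    using esc unfolding filterlim_at_infinity[OF order_refl] eventually_sequentially
    by (metis pi_gt_zero mult_pos_pos zero_less_numeral)
  obtain r H M where r: "0 < r" and H: "H holomorphic_on ball ((exp ^^ N) z0) r"
    "H ((exp ^^ N) z0) = z0" "\<And>w. w \<in> ball ((exp ^^ N) z0) r \<Longrightarrow> (exp ^^ N) (H w) = w"
    "\<And>w. w \<in> ball ((exp ^^ N) z0) r \<Longrightarrow> norm (deriv H w) \<le> M"
    using holomorphic_local_inverse_bounded[of "exp ^^ N" UNIV z0]
      holomorphic_exp_iterate deriv_exp_iterate_nonzero by blast
  define \<phi> where "\<phi> n = (\<lambda>u. H (pullback ((exp ^^ N) z0) (n - N) u))" for n
  have good: "\<forall>\<^sub>F n in sequentially. N \<le> n \<and> 2 * pi * (1 / 2) ^ (n - N) \<le> r"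
    using eventually_ge_at_top eventually_geometric_le[OF r] by (rule eventually_conj)
  then obtain n0 where n0: "\<And>n. n0 \<le> n \<Longrightarrow> N \<le> n \<and> 2 * pi * (1 / 2) ^ (n - N) \<le> r"
    unfolding eventually_sequentially by blast
  note branch = inverse_branch_along_orbit[OF far H(1,3,4), folded \<phi>_def]
  have small: "\<forall>\<^sub>F n in sequentially. N \<le> n \<and> 2 * pi * (1 / 2) ^ (n - N) \<le> r \<and>
      M * (1 / 2) ^ (n - N) \<le> \<epsilon>" if "0 < \<epsilon>" for \<epsilon>
    using good eventually_geometric_le[OF that] by (rule eventually_conj[THEN eventually_mono]) auto
  show ?thesis
  proof (intro exI[of _ n0] exI[of _ \<phi>] conjI allI impI)
    show "\<phi> n holomorphic_on ball ((exp ^^ n) z0) (2 * pi)"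
      "\<phi> n ((exp ^^ n) z0) = z0" "\<forall>z\<in>ball ((exp ^^ n) z0) (2 * pi). (exp ^^ n) (\<phi> n z) = z"
      if "n0 \<le> n" for n
      using branch[of n] n0[OF that] H(2) by (auto simp: \<phi>_def)
    show "\<forall>\<^sub>F n in sequentially. \<forall>z\<in>ball ((exp ^^ n) z0) (2 * pi). norm (deriv (\<phi> n) z) \<le> \<epsilon>"
      if "0 < \<epsilon>" for \<epsilon>
      using small[OF that] by (rule eventually_mono) (use branch in force)
    show "\<forall>\<^sub>F n in sequentially. bounded (\<phi> n ` ball ((exp ^^ n) z0) (2 * pi)) \<and>
        diameter (\<phi> n ` ball ((exp ^^ n) z0) (2 * pi)) \<le> \<epsilon>" if "0 < \<epsilon>" for \<epsilon>
    proof (rule eventually_mono[OF small])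
      show "0 < \<epsilon> / (4 * pi)" using that by simp
      fix n assume n: "N \<le> n \<and> 2 * pi * (1 / 2) ^ (n - N) \<le> r \<and> M * (1 / 2) ^ (n - N) \<le> \<epsilon> / (4 * pi)"
      note D = diameter_image_ball_le[of "\<phi> n" _ "2 * pi" "M * (1 / 2) ^ (n - N)"]
      have "2 * (2 * pi) * (M * (1 / 2) ^ (n - N)) \<le> \<epsilon>"
        using n pi_gt_zero by (simp add: field_simps)
      then show "bounded (\<phi> n ` ball ((exp ^^ n) z0) (2 * pi)) \<and>
          diameter (\<phi> n ` ball ((exp ^^ n) z0) (2 * pi)) \<le> \<epsilon>"
        using D branch[of n] n by fastforce
    qed
  qed
qed

end
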